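(* For every integer $q\ge 11$ there exists an $\mathcal{SOS}_q(3)$ of period $\frac{q^3-6q^2+2q}{2}$ if $q\equiv 0\pmod 4$, $\frac{q^3-6q^2-q}{2}$ if $q\equiv 1\pmod 4$, $\frac{q^3-8q^2+6q}{2}$ if $q\equiv 2\pmod 4$, and $\frac{q^3-4q^2-3q}{2}$ if $q\equiv 3\pmod 4$.
   Context: For a periodic sequence $S=(s_i)$ over $\mathbb{Z}_q$ write $\mathbf{s}_n(i)=(s_i,\ldots,s_{i+n-1})$; $\mathbf{u}^R$ denotes the reverse of a tuple and $-\mathbf{u}$ its termwise negative. An $\mathcal{SOS}_q(n)$ is a periodic sequence of period $m$ over $\mathbb{Z}_q$ such that $\mathbf{s}_n(i)=\mathbf{s}_n(j)$ implies $i\equiv j\pmod m$, and $\mathbf{s}_n(i)\neq\mathbf{s}_n(j)^R$ and $\mathbf{s}_n(i)\neq-\mathbf{s}_n(j)^R$ for all $i,j$. *)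

theory Defs
  imports Main
begin

text \<open>A sequence over Z_q is modelled as s :: nat => int with values in {0..<q}.
  The window s_n(i) = (s_i,...,s_{i+n-1}) is a list.\<close>

definition window :: "(nat \<Rightarrow> int) \<Rightarrow> nat \<Rightarrow> nat \<Rightarrow> int list" where
  "window s n i = map (\<lambda>k. s (i + k)) [0..<n]"

definition negq :: "int \<Rightarrow> int list \<Rightarrow> int list" where
  "negq q u = map (\<lambda>x. (- x) mod q) u"

definition periodic_seq :: "int \<Rightarrow> (nat \<Rightarrow> int) \<Rightarrow> nat \<Rightarrow> bool" where
  "periodic_seq q s m \<longleftrightarrow> m > 0 \<and> (\<forall>i. s i \<in> {0..<q}) \<and> (\<forall>i. s (i + m) = s i)"

definition is_SOS :: "int \<Rightarrow> nat \<Rightarrow> (nat \<Rightarrow> int) \<Rightarrow> nat \<Rightarrow> bool" where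
  "is_SOS q n s m \<longleftrightarrow> periodic_seq q s m
     \<and> (\<forall>i j. window s n i = window s n j \<longrightarrow> i mod m = j mod m)
     \<and> (\<forall>i j. window s n i \<noteq> rev (window s n j)
             \<and> window s n i \<noteq> rev (negq q (window s n j)))"

end

theory Submission
  imports Defs "Graph_Theory.Euler"
begin

(*
  The sequence is the sequence of partial sums s n = d 0 + ... + d (n - 1) (mod q) of a
  periodic difference sequence d. The window of s at i determines s i and the arc
  (d i, d (i + 1)). If every arc occurs once per period M of d and the period sum of d is a
  unit mod q, then s has period q M and pairwise distinct windows. The reversal of a window with
  arc (a, b) has arc (-b, -a), its negated reversal the arc (b, a), so the arc set must contain
  neither. A difference sequence running through every arc once is an Euler circuit, which
  exists for a balanced connected arc set.

  The arcs orient a graph on the residues x with x <> -x, joining a and b when |a| <> |b| (with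
  further exclusions for q = 1, 2 mod 4). The orientation is invariant under the rotation
  (a, b) |-> (-b, a), which gives balance, excludes (-b, -a), and makes the sum of first
  coordinates 0 mod q. Deleting a directed triangle whose first coordinates add up to q - 1 makes
  that sum 1 mod q; every remaining vertex stays adjacent to 2 or to q - 3, which are adjacent,
  so the arc set stays connected.
*)

section \<open>Partial sums of a difference cycle\<close>

definition reversal_free :: "int \<Rightarrow> (int \<times> int) set \<Rightarrow> bool" where
  "reversal_free q D \<longleftrightarrow> (\<forall>(a, b) \<in> D. (b, a) \<notin> D \<and> ((- b) mod q, (- a) mod q) \<notin> D)"

definition balanced :: "('a \<times> 'a) set \<Rightarrow> bool" where
  "balanced D \<longleftrightarrow> (\<forall>v. card {e \<in> D. snd e = v} = card {e \<in> D. fst e = v})"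

definition prefix_seq :: "int \<Rightarrow> (nat \<Rightarrow> int) \<Rightarrow> nat \<Rightarrow> int" where
  "prefix_seq q \<delta> n = (\<Sum>j<n. \<delta> j) mod q"

lemma reversal_freeD:
  "reversal_free q D \<Longrightarrow> (a, b) \<in> D \<Longrightarrow> (b, a) \<notin> D \<and> ((- b) mod q, (- a) mod q) \<notin> D"
  by (auto simp: reversal_free_def)

lemma reversal_free_subset: "reversal_free q D \<Longrightarrow> E \<subseteq> D \<Longrightarrow> reversal_free q E"
  by (auto simp: reversal_free_def)

lemma window_3: "window s 3 i = [s i, s (Suc i), s (Suc (Suc i))]"
  by (simp add: window_def numeral_3_eq_3 upt_rec)

lemma periodic_mod:
  fixes f :: "nat \<Rightarrow> 'a"
  assumes "\<And>i. f (i + M) = f i"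
  shows "f i = f (i mod M)"
proof -
  have "f (n + t * M) = f n" for n t
    using assms by (induction t arbitrary: n) (simp_all add: add.assoc [symmetric])
  then show ?thesis
    by (metis mod_mult_div_eq mult.commute add.commute)
qed

lemma sum_lessThan_periodic:
  fixes f :: "nat \<Rightarrow> 'a::comm_ring_1"
  assumes "\<And>i. f (i + M) = f i"
  shows "(\<Sum>j<n + t * M. f j) = (\<Sum>j<n. f j) + of_nat t * (\<Sum>j<M. f j)"
proof -
  have shift: "(\<Sum>j<k + M. f j) = (\<Sum>j<k. f j) + (\<Sum>j<M. f j)" for k
    by (induction k) (simp_all add: assms add.commute add.left_commute)
  show ?thesis
  proof (induction t)
    case (Suc t)
    have "(\<Sum>j<n + Suc t * M. f j) = (\<Sum>j<(n + t * M) + M. f j)"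
      by (simp add: algebra_simps)
    also have "\<dots> = (\<Sum>j<n. f j) + of_nat (Suc t) * (\<Sum>j<M. f j)"
      by (simp only: shift Suc) (simp add: algebra_simps)
    finally show ?case .
  qed simp
qed

lemma mod_mult_eqI:
  fixes i j M Q :: nat
  assumes "i mod M = j mod M" "(i div M) mod Q = (j div M) mod Q"
  shows "i mod (Q * M) = j mod (Q * M)"
  using assms by (simp add: mod_mult2_eq mult.commute [of Q])

context
  fixes q :: int and \<delta> :: "nat \<Rightarrow> int"
  assumes range: "\<And>i. \<delta> i \<in> {0..<q}"
begin

lemma prefix_seq_diff: "\<delta> i = (prefix_seq q \<delta> (Suc i) - prefix_seq q \<delta> i) mod q"
proof -
  have "(prefix_seq q \<delta> (Suc i) - prefix_seq q \<delta> i) mod q = \<delta> i mod q"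
    by (simp add: prefix_seq_def mod_diff_eq)
  then show ?thesis using range[of i] by simp
qed

lemma window_eq_imp_arc_eq:
  assumes "window (prefix_seq q \<delta>) 3 i = window (prefix_seq q \<delta>) 3 j"
  shows "prefix_seq q \<delta> i = prefix_seq q \<delta> j \<and> (\<delta> i, \<delta> (Suc i)) = (\<delta> j, \<delta> (Suc j))"
  using assms prefix_seq_diff[of i] prefix_seq_diff[of j] prefix_seq_diff[of "Suc i"]
    prefix_seq_diff[of "Suc j"]
  by (simp add: window_3)

lemma window_eq_rev_imp_arc:
  assumes "window (prefix_seq q \<delta>) 3 i = rev (window (prefix_seq q \<delta>) 3 j)"
  shows "(\<delta> i, \<delta> (Suc i)) = ((- \<delta> (Suc j)) mod q, (- \<delta> j) mod q)"
proof -
  have s: "prefix_seq q \<delta> i = prefix_seq q \<delta> (Suc (Suc j))"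
    "prefix_seq q \<delta> (Suc i) = prefix_seq q \<delta> (Suc j)" "prefix_seq q \<delta> (Suc (Suc i)) = prefix_seq q \<delta> j"
    using assms by (simp_all add: window_3)
  have "(- \<delta> k) mod q = (prefix_seq q \<delta> k - prefix_seq q \<delta> (Suc k)) mod q" for k
    using prefix_seq_diff[of k] by (simp add: mod_minus_eq)
  then show ?thesis
    unfolding prefix_seq_diff[of i] prefix_seq_diff[of "Suc i"] s by simp
qed

lemma window_eq_neg_rev_imp_arc:
  assumes "window (prefix_seq q \<delta>) 3 i = rev (negq q (window (prefix_seq q \<delta>) 3 j))"
  shows "(\<delta> i, \<delta> (Suc i)) = (\<delta> (Suc j), \<delta> j)"
proof -
  have s: "prefix_seq q \<delta> i = (- prefix_seq q \<delta> (Suc (Suc j))) mod q"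
    "prefix_seq q \<delta> (Suc i) = (- prefix_seq q \<delta> (Suc j)) mod q"
    "prefix_seq q \<delta> (Suc (Suc i)) = (- prefix_seq q \<delta> j) mod q"
    using assms by (simp_all add: window_3 negq_def)
  show ?thesis
    unfolding prefix_seq_diff[of i] prefix_seq_diff[of "Suc i"] prefix_seq_diff[of j]
      prefix_seq_diff[of "Suc j"] s
    by (simp add: mod_diff_eq)
qed

end

context
  fixes q :: int and \<delta> :: "nat \<Rightarrow> int" and M :: nat
  assumes q: "q > 0" and periodic: "\<And>i. \<delta> (i + M) = \<delta> i"
begin

lemma prefix_seq_periodic: "prefix_seq q \<delta> (i + nat q * M) = prefix_seq q \<delta> i"
  using sum_lessThan_periodic[of \<delta> M i "nat q", OF periodic] q by (simp add: prefix_seq_def)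

text \<open>A window fixes the position modulo \<open>M\<close>; the number of completed periods is then
  recovered from the first entry, because each period adds the unit \<open>\<Sum>i<M. \<delta> i\<close>.\<close>

lemma prefix_seq_eq_imp_mod_eq:
  assumes coprime: "coprime (\<Sum>i<M. \<delta> i) q"
    and ij: "i mod M = j mod M" and eq: "prefix_seq q \<delta> i = prefix_seq q \<delta> j"
  shows "i mod (nat q * M) = j mod (nat q * M)"
proof -
  define g where "g = (\<Sum>i<M. \<delta> i)"
  define c where "c = (\<Sum>k<j mod M. \<delta> k)"
  have "prefix_seq q \<delta> k = ((\<Sum>j<k mod M. \<delta> j) + int (k div M) * g) mod q" for k
    using sum_lessThan_periodic[of \<delta> M "k mod M" "k div M", OF periodic]
    by (simp add: prefix_seq_def g_def)
  then have "(c + int (i div M) * g) mod q = (c + int (j div M) * g) mod q"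
    using eq ij by (simp add: c_def)
  then have "q dvd (int (i div M) - int (j div M)) * g"
    by (simp add: mod_eq_dvd_iff left_diff_distrib)
  then have "q dvd int (i div M) - int (j div M)"
    using coprime by (simp add: g_def coprime_commute coprime_dvd_mult_left_iff)
  then have "int (i div M mod nat q) = int (j div M mod nat q)"
    using q by (simp add: of_nat_mod mod_eq_dvd_iff)
  then show ?thesis using mod_mult_eqI[OF ij] by simp
qed

lemma is_SOS_prefix_seq:
  assumes M: "M > 0" and range: "\<And>i. \<delta> i \<in> {0..<q}"
    and inj: "inj_on (\<lambda>i. (\<delta> i, \<delta> (Suc i))) {..<M}"
    and rev_free: "reversal_free q ((\<lambda>i. (\<delta> i, \<delta> (Suc i))) ` {..<M})"
    and coprime: "coprime (\<Sum>i<M. \<delta> i) q"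
  shows "is_SOS q 3 (prefix_seq q \<delta>) (nat q * M)"
proof -
  define arc where "arc i = (\<delta> i, \<delta> (Suc i))" for i
  have "arc (i + M) = arc i" for i
    using periodic[of i] periodic[of "Suc i"] by (simp add: arc_def)
  then have arc_mod: "arc i = arc (i mod M)" for i
    by (rule periodic_mod)
  have arc_in: "arc i \<in> arc ` {..<M}" for i
    using arc_mod[of i] M by auto
  have rev_free_arcs: "(b, a) \<notin> arc ` {..<M} \<and> ((- b) mod q, (- a) mod q) \<notin> arc ` {..<M}"
    if "arc i = (a, b)" for i a b
    using reversal_freeD[OF rev_free] arc_in[of i] that by (simp add: arc_def [abs_def])
  have "i mod (nat q * M) = j mod (nat q * M)"
    if "window (prefix_seq q \<delta>) 3 i = window (prefix_seq q \<delta>) 3 j" for i j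
  proof (rule prefix_seq_eq_imp_mod_eq[OF coprime])
    show "i mod M = j mod M"
      using inj_onD[OF inj, of "i mod M" "j mod M"] M arc_mod[of i] arc_mod[of j]
        window_eq_imp_arc_eq[OF range that] by (simp add: arc_def)
  qed (use window_eq_imp_arc_eq[OF range that] in blast)
  moreover have "window (prefix_seq q \<delta>) 3 i \<noteq> rev (window (prefix_seq q \<delta>) 3 j)" for i j
  proof
    assume "window (prefix_seq q \<delta>) 3 i = rev (window (prefix_seq q \<delta>) 3 j)"
    then have "arc i = ((- \<delta> (Suc j)) mod q, (- \<delta> j) mod q)"
      unfolding arc_def by (rule window_eq_rev_imp_arc[OF range])
    then show False using rev_free_arcs[of j] arc_in[of i] by (simp add: arc_def)
  qed
  moreover have "window (prefix_seq q \<delta>) 3 i \<noteq> rev (negq q (window (prefix_seq q \<delta>) 3 j))" for i j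
  proof
    assume "window (prefix_seq q \<delta>) 3 i = rev (negq q (window (prefix_seq q \<delta>) 3 j))"
    then have "arc i = (\<delta> (Suc j), \<delta> j)"
      unfolding arc_def by (rule window_eq_neg_rev_imp_arc[OF range])
    then show False using rev_free_arcs[of j] arc_in[of i] by (simp add: arc_def)
  qed
  moreover have "0 < nat q * M" "prefix_seq q \<delta> i \<in> {0..<q}" for i
    using q M by (simp_all add: prefix_seq_def)
  ultimately show ?thesis
    unfolding is_SOS_def periodic_seq_def using prefix_seq_periodic by blast
qed

end

section \<open>Euler circuits of balanced arc sets\<close>

lemma (in pre_digraph) cas_nth_head_tail:
  "cas u p v \<Longrightarrow> Suc i < length p \<Longrightarrow> head G (p ! i) = tail G (p ! Suc i)"
proof (induction p arbitrary: u i)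
  case (Cons e es)
  then show ?case by (cases i; cases es) auto
qed simp

lemma (in wf_digraph) closed_awalk_nth_head_tail:
  assumes walk: "awalk u p u" and ne: "p \<noteq> []"
  shows "head G (p ! (i mod length p)) = tail G (p ! (Suc i mod length p))"
proof -
  define M where "M = length p"
  have M: "M > 0" using ne by (simp add: M_def)
  have "awalk u (p @ p) u" using walk by simp
  then have cas: "cas u (p @ p) u" unfolding awalk_def by blast
  have nth_pp: "(p @ p) ! k = p ! (k mod M)" if "k < 2 * M" for k
    using that by (cases "k < M") (simp_all add: nth_append M_def le_mod_geq)
  show ?thesis
    using cas_nth_head_tail[OF cas, of "i mod M"] nth_pp[of "i mod M"] nth_pp[of "Suc (i mod M)"]
      mod_less_divisor[OF M, of i]
    by (simp add: M_def [symmetric] mod_Suc_eq)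
qed

lemma euler_circuit_of_balanced_arcs:
  fixes D :: "('a \<times> 'a) set"
  assumes fin: "finite D" and ne: "D \<noteq> {}" and balanced: "balanced D"
    and connected: "\<And>u v. u \<in> Field D \<Longrightarrow> v \<in> Field D \<Longrightarrow> (u, v) \<in> (D \<union> D\<inverse>)\<^sup>*"
  obtains p where "distinct p" "set p = D"
    "\<And>i. snd (p ! (i mod length p)) = fst (p ! (Suc i mod length p))"
proof -
  define G where "G = \<lparr>verts = Field D, arcs = D, tail = fst, head = snd\<rparr>"
  have G_simps [simp]: "verts G = Field D" "arcs G = D" "tail G = fst" "head G = snd"
    by (simp_all add: G_def)
  interpret fin_digraph G
    by unfold_locales (auto simp: fin finite_Field intro: FieldI1 FieldI2)
  have "connected G"
  proof (rule connectedI)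
    show "verts G \<noteq> {}" using ne by (auto simp: Field_def)
    fix u v assume "u \<in> verts G" "v \<in> verts G"
    then have "(u, v) \<in> rtrancl_on (Field D) (D \<union> D\<inverse>)"
      using connected by (intro rtrancl_consistent_rtrancl_on) (auto intro: FieldI1 FieldI2)
    moreover have "parcs (mk_symmetric G) = D \<union> D\<inverse>"
      by (auto simp: parcs_mk_symmetric)
    ultimately show "u \<rightarrow>\<^sup>*\<^bsub>mk_symmetric G\<^esub> v" by (simp add: reachable_def)
  qed
  moreover have "in_degree G v = out_degree G v" for v
    using balanced by (simp add: balanced_def in_degree_def out_degree_def in_arcs_def out_arcs_def)
  ultimately obtain u p where "euler_trail u p u" using closed_euler1 by blast
  then have "distinct p" "set p = D" "awalk u p u"
    by (auto simp: euler_trail_def trail_def)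
  with ne closed_awalk_nth_head_tail show thesis by (intro that) auto
qed

lemma closed_trail_of_balanced_arcs:
  fixes D :: "('a \<times> 'a) set"
  assumes "finite D" "D \<noteq> {}" "balanced D"
    and "\<And>u v. u \<in> Field D \<Longrightarrow> v \<in> Field D \<Longrightarrow> (u, v) \<in> (D \<union> D\<inverse>)\<^sup>*"
  obtains \<delta> :: "nat \<Rightarrow> 'a" where "\<And>i. \<delta> (i + card D) = \<delta> i"
    "inj_on (\<lambda>i. (\<delta> i, \<delta> (Suc i))) {..<card D}"
    "(\<lambda>i. (\<delta> i, \<delta> (Suc i))) ` {..<card D} = D"
proof -
  obtain p where distinct: "distinct p" and set_p: "set p = D"
    and consecutive: "\<And>i. snd (p ! (i mod length p)) = fst (p ! (Suc i mod length p))"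
    using euler_circuit_of_balanced_arcs[OF assms] by blast
  define M where "M = length p"
  have M: "card D = M" using distinct_card[OF distinct] set_p by (simp add: M_def)
  define \<delta> where "\<delta> i = fst (p ! (i mod M))" for i
  have arc: "(\<delta> i, \<delta> (Suc i)) = p ! i" if "i < M" for i
    using consecutive[of i] that by (simp add: \<delta>_def M_def prod_eq_iff)
  show ?thesis
  proof
    show "\<delta> (i + card D) = \<delta> i" for i by (simp add: \<delta>_def M)
    show "inj_on (\<lambda>i. (\<delta> i, \<delta> (Suc i))) {..<card D}"
      using inj_on_nth[OF distinct, of "{..<M}"] arc by (simp add: M M_def inj_on_def)
    show "(\<lambda>i. (\<delta> i, \<delta> (Suc i))) ` {..<card D} = D"
      using nth_image[of M p] arc set_p by (simp add: M M_def atLeast0LessThan)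
  qed
qed

lemma is_SOS_of_arc_set:
  fixes q :: int and D :: "(int \<times> int) set"
  assumes q: "q > 0" and fin: "finite D" and ne: "D \<noteq> {}"
    and range: "D \<subseteq> {0..<q} \<times> {0..<q}"
    and balanced: "balanced D"
    and connected: "\<And>u v. u \<in> Field D \<Longrightarrow> v \<in> Field D \<Longrightarrow> (u, v) \<in> (D \<union> D\<inverse>)\<^sup>*"
    and rev_free: "reversal_free q D"
    and coprime: "coprime (\<Sum>e\<in>D. fst e) q"
  shows "\<exists>s. is_SOS q 3 s (nat q * card D)"
proof -
  obtain \<delta> :: "nat \<Rightarrow> int" where periodic: "\<And>i. \<delta> (i + card D) = \<delta> i"
    and inj: "inj_on (\<lambda>i. (\<delta> i, \<delta> (Suc i))) {..<card D}"
    and arcs: "(\<lambda>i. (\<delta> i, \<delta> (Suc i))) ` {..<card D} = D"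
    using closed_trail_of_balanced_arcs[OF fin ne balanced connected] by blast
  have M: "card D > 0" using fin ne by (simp add: card_gt_0_iff)
  have "\<delta> i \<in> {0..<q}" for i
  proof -
    have "(\<delta> (i mod card D), \<delta> (Suc (i mod card D))) \<in> D"
      using arcs M by auto
    then show ?thesis using periodic_mod[of \<delta>, OF periodic] range by auto
  qed
  moreover have "(\<Sum>i<card D. \<delta> i) = (\<Sum>e\<in>D. fst e)"
    using sum.reindex[OF inj, of fst] arcs by simp
  ultimately show ?thesis
    using is_SOS_prefix_seq[OF q periodic M _ inj] arcs rev_free coprime by auto
qed

lemma rtrancl_symmetric_via_hub:
  assumes "\<And>v. v \<in> V \<Longrightarrow> (v, h) \<in> (D \<union> D\<inverse>)\<^sup>*" "u \<in> V" "v \<in> V"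
  shows "(u, v) \<in> (D \<union> D\<inverse>)\<^sup>*"
proof -
  have "(h, v) \<in> ((D \<union> D\<inverse>)\<inverse>)\<^sup>*"
    using assms(1)[OF assms(3)] by (simp add: rtrancl_converse)
  then have "(h, v) \<in> (D \<union> D\<inverse>)\<^sup>*"
    by (simp add: converse_Un Un_commute)
  with assms(1)[OF assms(2)] show ?thesis by (rule rtrancl_trans)
qed

lemma balanced_3_cycle:
  assumes "x \<noteq> y" "y \<noteq> z" "z \<noteq> x"
  shows "balanced {(x, y), (y, z), (z, x)}"
  unfolding balanced_def
proof
  fix v
  consider "v = x" | "v = y" | "v = z" | "v \<notin> {x, y, z}" by blast
  then show "card {e \<in> {(x, y), (y, z), (z, x)}. snd e = v} = card {e \<in> {(x, y), (y, z), (z, x)}. fst e = v}"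
  proof cases
    case 1
    then have "{e \<in> {(x, y), (y, z), (z, x)}. snd e = v} = {(z, x)}"
      "{e \<in> {(x, y), (y, z), (z, x)}. fst e = v} = {(x, y)}" using assms by auto
    then show ?thesis by simp
  next
    case 2
    then have "{e \<in> {(x, y), (y, z), (z, x)}. snd e = v} = {(x, y)}"
      "{e \<in> {(x, y), (y, z), (z, x)}. fst e = v} = {(y, z)}" using assms by auto
    then show ?thesis by simp
  next
    case 3
    then have "{e \<in> {(x, y), (y, z), (z, x)}. snd e = v} = {(y, z)}"
      "{e \<in> {(x, y), (y, z), (z, x)}. fst e = v} = {(z, x)}" using assms by auto
    then show ?thesis by simp
  next
    case 4
    then have "{e \<in> {(x, y), (y, z), (z, x)}. snd e = v} = {}"
      "{e \<in> {(x, y), (y, z), (z, x)}. fst e = v} = {}" by auto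
    then show ?thesis by (simp only: card.empty)
  qed
qed

lemma balanced_Diff:
  assumes "finite D" "T \<subseteq> D" "balanced D" "balanced T"
  shows "balanced (D - T)"
proof -
  have "card {e \<in> D - T. P e} = card {e \<in> D. P e} - card {e \<in> T. P e}" for P
  proof -
    have "{e \<in> D - T. P e} = {e \<in> D. P e} - {e \<in> T. P e}" by blast
    then show ?thesis using assms(1,2) by (simp add: card_Diff_subset finite_subset subset_iff)
  qed
  then show ?thesis using assms(3,4) by (simp add: balanced_def)
qed

section \<open>An orientation of a graph on residues\<close>

definition self_neg :: "int \<Rightarrow> int \<Rightarrow> bool" where
  "self_neg q x \<longleftrightarrow> x mod q = 0 \<or> 2 * (x mod q) = q"

definition lower_half :: "int \<Rightarrow> int \<Rightarrow> bool" where
  "lower_half q x \<longleftrightarrow> 0 < x mod q \<and> 2 * (x mod q) < q"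

definition absq :: "int \<Rightarrow> int \<Rightarrow> int" where
  "absq q x = min (x mod q) (q - x mod q)"

lemma self_neg_cong: "x mod q = y mod q \<Longrightarrow> self_neg q x = self_neg q y"
  by (simp add: self_neg_def)

lemma lower_half_cong: "x mod q = y mod q \<Longrightarrow> lower_half q x = lower_half q y"
  by (simp add: lower_half_def)

lemma absq_cong: "x mod q = y mod q \<Longrightarrow> absq q x = absq q y"
  by (simp add: absq_def)

lemma self_neg_uminus: "q > 0 \<Longrightarrow> self_neg q (- x) = self_neg q x"
proof -
  assume "q > 0"
  then have "0 \<le> x mod q" "x mod q < q" by simp_all
  then show ?thesis by (auto simp: self_neg_def zmod_zminus1_eq_if)
qed

lemma absq_uminus: "q > 0 \<Longrightarrow> absq q (- x) = absq q x"
proof -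
  assume "q > 0"
  then have "0 \<le> x mod q" "x mod q < q" by simp_all
  then show ?thesis by (auto simp: absq_def zmod_zminus1_eq_if)
qed

lemma lower_half_uminus: "q > 0 \<Longrightarrow> \<not> self_neg q x \<Longrightarrow> lower_half q (- x) \<longleftrightarrow> \<not> lower_half q x"
proof -
  assume "q > 0"
  then have "0 \<le> x mod q" "x mod q < q" by simp_all
  then show "\<not> self_neg q x \<Longrightarrow> ?thesis"
    by (auto simp: self_neg_def lower_half_def zmod_zminus1_eq_if)
qed

lemma half_uminus: "q > 0 \<Longrightarrow> 2 * ((- x) mod q) = q \<longleftrightarrow> 2 * (x mod q) = (q :: int)"
  by (auto simp: zmod_zminus1_eq_if)

lemma self_neg_diff_swap: "q > 0 \<Longrightarrow> self_neg q (a - b) = self_neg q (b - a)"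
  using self_neg_uminus[of q "b - a"] by simp

lemma absq_diff_swap: "q > 0 \<Longrightarrow> absq q (a - b) = absq q (b - a)"
  using absq_uminus[of q "b - a"] by simp

lemma lower_half_diff_swap:
  "q > 0 \<Longrightarrow> \<not> self_neg q (b - a) \<Longrightarrow> lower_half q (a - b) \<longleftrightarrow> \<not> lower_half q (b - a)"
  using lower_half_uminus[of q "b - a"] by simp

lemma half_diff_swap: "q > 0 \<Longrightarrow> 2 * ((a - b) mod q) = q \<longleftrightarrow> 2 * ((b - a) mod q) = (q :: int)"
  using half_uminus[of q "b - a"] by simp

lemma absq_bounds: "q > 0 \<Longrightarrow> \<not> self_neg q x \<Longrightarrow> 1 \<le> absq q x \<and> 2 * absq q x < q"
proof -
  assume "q > 0"
  then have "0 \<le> x mod q" "x mod q < q" by simp_all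
  then show "\<not> self_neg q x \<Longrightarrow> ?thesis"
    by (auto simp: self_neg_def absq_def min_def)
qed

lemma residue_diff_add_mod:
  fixes a b q :: int
  assumes "0 \<le> a" "a < q" "0 \<le> b" "b < q"
  shows "(b - a) mod q = (if b < a then b - a + q else b - a)"
    and "(b + a) mod q = (if b + a < q then b + a else b + a - q)"
    and "a mod q = a" "b mod q = b"
proof -
  have "(b - a + q) mod q = b - a + q" if "b < a"
    using assms that by (intro mod_pos_pos_trivial) auto
  then show "(b - a) mod q = (if b < a then b - a + q else b - a)"
    using assms by auto
  have "(b + a - q) mod q = b + a - q" if "\<not> b + a < q"
    using assms that by (intro mod_pos_pos_trivial) auto
  then show "(b + a) mod q = (if b + a < q then b + a else b + a - q)"
    using assms by (auto simp: mod_diff_right_eq [symmetric])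
qed (use assms in simp_all)

context
  fixes a b q :: int
  assumes residues: "0 \<le> a" "a < q" "0 \<le> b" "b < q"
    and not_self_neg: "\<not> self_neg q a" "\<not> self_neg q b"
begin

lemma absq_diff_ne_absq_add: "absq q (b - a) \<noteq> absq q (b + a)"
  using residues not_self_neg unfolding absq_def self_neg_def residue_diff_add_mod[OF residues]
  by (simp add: min_def split: if_splits)

lemma half_diff_or_add_imp_absq_sum:
  "2 * ((b - a) mod q) = q \<or> 2 * ((b + a) mod q) = q \<Longrightarrow> 2 * absq q a + 2 * absq q b = q"
  using residues not_self_neg unfolding absq_def self_neg_def residue_diff_add_mod[OF residues]
  by (auto simp: min_def split: if_splits)

lemma half_diff_imp_not_half_add: "2 * ((b - a) mod q) = q \<Longrightarrow> 2 * ((b + a) mod q) \<noteq> q"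
  using residues not_self_neg unfolding self_neg_def residue_diff_add_mod[OF residues]
  by (auto split: if_splits)

lemma self_neg_diff_or_add_imp_half:
  "absq q a \<noteq> absq q b \<Longrightarrow> self_neg q (b - a) \<or> self_neg q (b + a)
    \<Longrightarrow> 2 * ((b - a) mod q) = q \<or> 2 * ((b + a) mod q) = q"
  using residues not_self_neg unfolding absq_def self_neg_def residue_diff_add_mod[OF residues]
  by (auto simp: min_def split: if_splits)

end

definition is_edge :: "int \<Rightarrow> int \<Rightarrow> int \<Rightarrow> bool" where
  "is_edge q a b \<longleftrightarrow> \<not> self_neg q a \<and> \<not> self_neg q b \<and> absq q a \<noteq> absq q b
     \<and> (q mod 4 = 1 \<longrightarrow> (absq q a + 1) div 2 \<noteq> (absq q b + 1) div 2)
     \<and> (q mod 4 = 2 \<longrightarrow> 2 * absq q a + 2 * absq q b \<noteq> q)"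

text \<open>Of \<open>(a, b)\<close> and \<open>(b, a)\<close> exactly one satisfies the generic rule, since swapping \<open>a, b\<close>
  negates \<open>b - a\<close>; the rule is also invariant under \<open>(a, b) \<mapsto> (-b, a)\<close>, which exchanges
  \<open>b - a\<close> and \<open>b + a\<close> up to sign. It needs \<open>b \<plusminus> a\<close> not self-negative; when \<open>4\<close> divides
  \<open>q\<close>, the remaining edges, those with \<open>b \<plusminus> a = q/2\<close>, are oriented by the special rule.\<close>

definition generic_arc :: "int \<Rightarrow> int \<Rightarrow> int \<Rightarrow> bool" where
  "generic_arc q a b \<longleftrightarrow> is_edge q a b \<and> \<not> self_neg q (b - a) \<and> \<not> self_neg q (b + a)
     \<and> ((lower_half q (b - a) = lower_half q (b + a)) = (absq q (b - a) < absq q (b + a)))"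

definition special_arc :: "int \<Rightarrow> int \<Rightarrow> int \<Rightarrow> bool" where
  "special_arc q a b \<longleftrightarrow> q mod 4 = 0 \<and> \<not> self_neg q a \<and> \<not> self_neg q b
     \<and> ((2 * ((b - a) mod q) = q \<and> 4 * absq q a < q) \<or> (2 * ((b + a) mod q) = q \<and> 4 * absq q a > q))"

definition is_arc :: "int \<Rightarrow> int \<Rightarrow> int \<Rightarrow> bool" where
  "is_arc q a b \<longleftrightarrow> generic_arc q a b \<or> special_arc q a b"

lemma is_edge_sym: "is_edge q a b = is_edge q b a"
  by (auto simp: is_edge_def)

lemma special_arc_imp_half:
  "special_arc q a b \<Longrightarrow> 2 * ((b - a) mod q) = q \<or> 2 * ((b + a) mod q) = q"
  by (auto simp: special_arc_def)

context
  fixes a b q :: int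
  assumes residues: "0 \<le> a" "a < q" "0 \<le> b" "b < q"
begin

lemma is_arc_imp_is_edge: "is_arc q a b \<Longrightarrow> is_edge q a b"
proof (unfold is_arc_def, elim disjE)
  assume "special_arc q a b"
  then have "\<not> self_neg q a" "\<not> self_neg q b" "q mod 4 = 0" "4 * absq q a \<noteq> q"
    and "2 * ((b - a) mod q) = q \<or> 2 * ((b + a) mod q) = q"
    by (auto simp: special_arc_def)
  with half_diff_or_add_imp_absq_sum[OF residues] show "is_edge q a b"
    by (auto simp: is_edge_def)
qed (simp add: generic_arc_def)

lemma is_arc_iff_not_is_arc_swap_generic:
  assumes q: "q > 0" and edge: "is_edge q a b"
    and generic: "\<not> self_neg q (b - a)" "\<not> self_neg q (b + a)"
  shows "is_arc q a b \<longleftrightarrow> \<not> is_arc q b a"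
proof -
  from edge have "\<not> self_neg q a" "\<not> self_neg q b" by (auto simp: is_edge_def)
  then have "absq q (b - a) \<noteq> absq q (b + a)" by (rule absq_diff_ne_absq_add[OF residues])
  moreover have "\<not> special_arc q a b" "\<not> special_arc q b a"
    using generic half_diff_swap[OF q, of a b] special_arc_imp_half[of q a b] special_arc_imp_half[of q b a]
    by (auto simp: self_neg_def add.commute[of a b])
  ultimately show ?thesis
    using generic edge is_edge_sym[of q a b] self_neg_diff_swap[OF q, of a b] absq_diff_swap[OF q, of a b]
      lower_half_diff_swap[OF q, of a b]
    by (auto simp: is_arc_def generic_arc_def add.commute[of a b])
qed

lemma is_arc_iff_not_is_arc_swap_special:
  assumes q: "q > 0" and edge: "is_edge q a b"
    and special: "self_neg q (b - a) \<or> self_neg q (b + a)"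
  shows "is_arc q a b \<longleftrightarrow> \<not> is_arc q b a"
proof -
  from edge have na: "\<not> self_neg q a" and nb: "\<not> self_neg q b" and ne: "absq q a \<noteq> absq q b"
    by (auto simp: is_edge_def)
  have not_generic: "\<not> generic_arc q a b" "\<not> generic_arc q b a"
    using special self_neg_diff_swap[OF q, of a b] by (auto simp: generic_arc_def add.commute[of a b])
  have half: "2 * ((b - a) mod q) = q \<or> 2 * ((b + a) mod q) = q"
    using self_neg_diff_or_add_imp_half[OF residues na nb ne special] .
  have sum: "2 * absq q a + 2 * absq q b = q"
    using half_diff_or_add_imp_absq_sum[OF residues na nb half] .
  have "q mod 4 \<noteq> 2" using edge sum by (simp add: is_edge_def)
  moreover have "even q" using sum by presburger
  ultimately have q4: "q mod 4 = 0" by presburger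
  have "(special_arc q a b \<longleftrightarrow> 4 * absq q a < q) \<and> (special_arc q b a \<longleftrightarrow> 4 * absq q b < q)
    \<or> (special_arc q a b \<longleftrightarrow> 4 * absq q a > q) \<and> (special_arc q b a \<longleftrightarrow> 4 * absq q b > q)"
    using q4 half half_diff_imp_not_half_add[OF residues na nb] half_diff_swap[OF q, of a b] na nb
    by (auto simp: special_arc_def add.commute[of a b])
  then show ?thesis using not_generic sum ne by (auto simp: is_arc_def)
qed

lemma is_arc_iff_not_is_arc_swap:
  "q > 0 \<Longrightarrow> is_edge q a b \<Longrightarrow> is_arc q a b \<longleftrightarrow> \<not> is_arc q b a"
  using is_arc_iff_not_is_arc_swap_generic is_arc_iff_not_is_arc_swap_special by blast

lemma is_arc_rotate:
  assumes q: "q > 0" and arc: "is_arc q a b"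
  shows "is_arc q ((- b) mod q) a"
proof -
  define a' where "a' = (- b) mod q"
  have diff: "(a - a') mod q = (b + a) mod q" and sum: "(a + a') mod q = (- (b - a)) mod q"
    by (simp_all add: a'_def mod_diff_right_eq add.commute mod_add_right_eq)
  have a': "self_neg q a' = self_neg q b" "absq q a' = absq q b"
    using self_neg_uminus[OF q, of b] absq_uminus[OF q, of b]
      self_neg_cong[of a' q "- b"] absq_cong[of a' q "- b"] by (simp_all add: a'_def)
  have edge: "is_edge q a' a = is_edge q a b"
    using a' by (auto simp: is_edge_def)
  have "generic_arc q a' a" if "generic_arc q a b"
  proof -
    from that have "\<not> self_neg q a" "\<not> self_neg q b" by (auto simp: generic_arc_def is_edge_def)
    then have "absq q (b - a) \<noteq> absq q (b + a)"
      by (rule absq_diff_ne_absq_add[OF residues])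
    with that edge show ?thesis
      using self_neg_cong[OF diff] lower_half_cong[OF diff] absq_cong[OF diff]
        self_neg_cong[OF sum] lower_half_cong[OF sum] absq_cong[OF sum]
        self_neg_uminus[OF q, of "b - a"] lower_half_uminus[OF q, of "b - a"]
        absq_uminus[OF q, of "b - a"]
      by (auto simp: generic_arc_def)
  qed
  moreover have "special_arc q a' a" if special: "special_arc q a b"
  proof -
    from special have na: "\<not> self_neg q a" and nb: "\<not> self_neg q b"
      and half: "2 * ((b - a) mod q) = q \<or> 2 * ((b + a) mod q) = q"
      by (auto simp: special_arc_def)
    have "2 * absq q a + 2 * absq q b = q"
      using half_diff_or_add_imp_absq_sum[OF residues na nb half] .
    then show ?thesis
      using special diff sum half_uminus[OF q, of "b - a"] a'
      by (auto simp: special_arc_def)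
  qed
  ultimately show ?thesis using arc by (auto simp: is_arc_def a'_def)
qed

lemma is_arc_imp_not_is_arc_neg_swap:
  assumes q: "q > 0" and arc: "is_arc q a b"
  shows "\<not> is_arc q ((- b) mod q) ((- a) mod q)"
proof -
  define a' b' where "a' = (- b) mod q" and "b' = (- a) mod q"
  have "(b' - a') mod q = (- a - - b) mod q"
    by (simp add: a'_def b'_def mod_diff_eq)
  then have diff: "(b' - a') mod q = (b - a) mod q" by simp
  have "(b' + a') mod q = (- a + - b) mod q"
    by (simp add: a'_def b'_def mod_add_eq)
  then have sum: "(b' + a') mod q = (- (b + a)) mod q" by (simp add: add.commute)
  have a': "absq q a' = absq q b"
    using absq_uminus[OF q, of b] absq_cong[of a' q "- b"] by (simp add: a'_def)
  have halves: "2 * ((b' - a') mod q) = q \<longleftrightarrow> 2 * ((b - a) mod q) = q"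
    "2 * ((b' + a') mod q) = q \<longleftrightarrow> 2 * ((b + a) mod q) = q"
    using diff sum half_uminus[OF q, of "b + a"] by simp_all
  have "\<not> generic_arc q a' b'" if "generic_arc q a b"
    using that self_neg_cong[OF diff] lower_half_cong[OF diff] absq_cong[OF diff]
      self_neg_cong[OF sum] lower_half_cong[OF sum] absq_cong[OF sum]
      self_neg_uminus[OF q, of "b + a"] lower_half_uminus[OF q, of "b + a"]
      absq_uminus[OF q, of "b + a"]
    by (auto simp: generic_arc_def)
  moreover have "\<not> special_arc q a' b'" if "generic_arc q a b"
    using that halves special_arc_imp_half[of q a' b'] by (auto simp: generic_arc_def self_neg_def)
  moreover have "\<not> generic_arc q a' b'" if "special_arc q a b"
    using that special_arc_imp_half[of q a b] halves self_neg_cong[OF diff] self_neg_cong[OF sum]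
      self_neg_uminus[OF q, of "b + a"]
    by (auto simp: generic_arc_def self_neg_def)
  moreover have "\<not> special_arc q a' b'" if special: "special_arc q a b"
  proof -
    from special have na: "\<not> self_neg q a" and nb: "\<not> self_neg q b"
      and half: "2 * ((b - a) mod q) = q \<or> 2 * ((b + a) mod q) = q"
      by (auto simp: special_arc_def)
    have "2 * absq q a + 2 * absq q b = q"
      using half_diff_or_add_imp_absq_sum[OF residues na nb half] .
    then show ?thesis
      using special halves a' half_diff_imp_not_half_add[OF residues na nb]
      by (auto simp: special_arc_def)
  qed
  ultimately show ?thesis using arc by (auto simp: is_arc_def a'_def b'_def)
qed

end

section \<open>Counting the arcs\<close>

definition edge_set :: "int \<Rightarrow> (int \<times> int) set" where
  "edge_set q = {(a, b). 0 \<le> a \<and> a < q \<and> 0 \<le> b \<and> b < q \<and> is_edge q a b}"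

definition arc_set :: "int \<Rightarrow> (int \<times> int) set" where
  "arc_set q = {(a, b). 0 \<le> a \<and> a < q \<and> 0 \<le> b \<and> b < q \<and> is_arc q a b}"

lemma finite_arc_set: "finite (arc_set q)"
  by (rule finite_subset[of _ "{0..<q} \<times> {0..<q}"]) (auto simp: arc_set_def)

lemma arc_setD:
  "(a, b) \<in> arc_set q \<Longrightarrow> 0 \<le> a \<and> a < q \<and> 0 \<le> b \<and> b < q \<and> \<not> self_neg q a \<and> \<not> self_neg q b"
  by (auto simp: arc_set_def is_arc_def generic_arc_def special_arc_def is_edge_def)

lemma arc_set_rotate: "q > 0 \<Longrightarrow> (a, b) \<in> arc_set q \<Longrightarrow> ((- b) mod q, a) \<in> arc_set q"
  using is_arc_rotate[of a q b] by (auto simp: arc_set_def)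

lemma arc_set_uminus:
  "q > 0 \<Longrightarrow> (a, b) \<in> arc_set q \<Longrightarrow> ((- a) mod q, (- b) mod q) \<in> arc_set q"
  using arc_set_rotate[of q "(- b) mod q" a] arc_set_rotate[of q a b] by simp

lemma arc_set_imp_not_swap:
  assumes q: "q > 0" and ab: "(a, b) \<in> arc_set q"
  shows "(b, a) \<notin> arc_set q"
proof -
  from ab have r: "0 \<le> a" "a < q" "0 \<le> b" "b < q" and arc: "is_arc q a b"
    by (simp_all add: arc_set_def)
  show ?thesis
    using is_arc_iff_not_is_arc_swap[OF r q is_arc_imp_is_edge[OF r arc]] arc
    by (simp add: arc_set_def)
qed

lemma reversal_free_arc_set: "q > 0 \<Longrightarrow> reversal_free q (arc_set q)"
  using arc_set_imp_not_swap is_arc_imp_not_is_arc_neg_swap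
  by (auto simp: reversal_free_def arc_set_def)

lemma card_edge_set_eq_twice_card_arc_set:
  assumes q: "q > 0"
  shows "card (edge_set q) = 2 * card (arc_set q)"
proof -
  have "e \<in> arc_set q \<union> prod.swap ` arc_set q" if "e \<in> edge_set q" for e
  proof -
    obtain a b where e: "e = (a, b)" and r: "0 \<le> a" "a < q" "0 \<le> b" "b < q"
      and edge: "is_edge q a b"
      using \<open>e \<in> edge_set q\<close> by (auto simp: edge_set_def)
    then have "is_arc q a b \<or> is_arc q b a"
      using is_arc_iff_not_is_arc_swap[OF r q edge] by blast
    then show ?thesis using r e by (auto simp: arc_set_def image_iff)
  qed
  moreover have "arc_set q \<union> prod.swap ` arc_set q \<subseteq> edge_set q"
    using is_arc_imp_is_edge is_edge_sym by (auto simp: edge_set_def arc_set_def)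
  ultimately have "edge_set q = arc_set q \<union> prod.swap ` arc_set q" by blast
  moreover have "arc_set q \<inter> prod.swap ` arc_set q = {}"
    using arc_set_imp_not_swap[OF q] by auto
  ultimately show ?thesis
    using finite_arc_set[of q] card_image[of prod.swap "arc_set q"]
    by (simp add: card_Un_disjoint)
qed

lemma uminus_mod_inj_on_residues:
  fixes b b' q :: int
  assumes "0 \<le> b" "b < q" "0 \<le> b'" "b' < q" "(- b) mod q = (- b') mod q"
  shows "b = b'"
  using assms by (metis add.inverse_inverse mod_minus_eq mod_pos_pos_trivial)

lemma balanced_arc_set:
  assumes q: "q > 0"
  shows "balanced (arc_set q)"
  unfolding balanced_def
proof
  fix v
  let ?rot = "\<lambda>(a::int, b::int). ((- b) mod q, a)"
  let ?unrot = "\<lambda>(a::int, b::int). (b, (- a) mod q)"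
  have "(b, (- a) mod q) \<in> arc_set q" if "(a, b) \<in> arc_set q" for a b
    using arc_set_rotate[OF q arc_set_uminus[OF q that]] arc_setD[OF that] by (simp add: mod_minus_eq)
  then have unrot: "?unrot e \<in> arc_set q" if "e \<in> arc_set q" for e
    using that by (cases e) simp
  show "card {e \<in> arc_set q. snd e = v} = card {e \<in> arc_set q. fst e = v}"
  proof (rule card_bij_eq[of ?unrot _ _ ?rot])
    show "inj_on ?unrot {e \<in> arc_set q. snd e = v}"
      by (auto simp: inj_on_def dest!: arc_setD intro: uminus_mod_inj_on_residues)
    show "inj_on ?rot {e \<in> arc_set q. fst e = v}"
      by (auto simp: inj_on_def dest!: arc_setD intro: uminus_mod_inj_on_residues)
    show "?unrot ` {e \<in> arc_set q. snd e = v} \<subseteq> {e \<in> arc_set q. fst e = v}"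
      using unrot by auto
    show "?rot ` {e \<in> arc_set q. fst e = v} \<subseteq> {e \<in> arc_set q. snd e = v}"
      using arc_set_rotate[OF q] by auto
  qed (simp_all add: finite_arc_set)
qed

lemma sum_fst_arc_set:
  assumes q: "q > 0"
  shows "2 * (\<Sum>e\<in>arc_set q. fst e) = q * int (card (arc_set q))"
proof -
  let ?neg = "\<lambda>(a::int, b::int). ((- a) mod q, (- b) mod q)"
  have neg: "?neg (?neg e) = e \<and> ?neg e \<in> arc_set q \<and> fst (?neg e) = q - fst e"
    if e: "e \<in> arc_set q" for e
  proof -
    obtain a b where ab: "e = (a, b)" by (cases e)
    with e have "0 < a" "a < q" "0 < b" "b < q"
      using arc_setD[of a b q] by (auto simp: self_neg_def)
    then show ?thesis
      using arc_set_uminus[OF q, of a b] e ab by (simp add: zmod_zminus1_eq_if)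
  qed
  have "(\<Sum>e\<in>arc_set q. q - fst e) = (\<Sum>e\<in>arc_set q. fst e)"
    by (rule sum.reindex_bij_witness[of _ ?neg ?neg]) (use neg in auto)
  then show ?thesis by (simp add: sum_subtractf mult.commute)
qed

lemma card_residues_by_absq:
  fixes q :: int and P :: "int \<Rightarrow> bool"
  assumes q: "q > 0"
  shows "card {x \<in> {0..<q}. \<not> self_neg q x \<and> P (absq q x)} = 2 * card {v \<in> {1..(q - 1) div 2}. P v}"
proof -
  define h where "h = (q - 1) div 2"
  have h: "2 * h \<le> q - 1" "q - 2 \<le> 2 * h" unfolding h_def by presburger+
  define S where "S = {v \<in> {1..h}. P v}"
  have "{x \<in> {0..<q}. \<not> self_neg q x \<and> P (absq q x)} = S \<union> (\<lambda>v. q - v) ` S"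
  proof (intro set_eqI iffI)
    fix x assume "x \<in> {x \<in> {0..<q}. \<not> self_neg q x \<and> P (absq q x)}"
    then have x: "0 \<le> x" "x < q" "x \<noteq> 0" "2 * x \<noteq> q" "P (absq q x)"
      by (auto simp: self_neg_def)
    show "x \<in> S \<union> (\<lambda>v. q - v) ` S"
    proof (cases "2 * x < q")
      case True
      then show ?thesis using x h by (auto simp: S_def absq_def)
    next
      case False
      then have "q - x \<in> S" using x h by (auto simp: S_def absq_def)
      then show ?thesis by (auto simp: image_iff intro: bexI[of _ "q - x"])
    qed
  next
    fix x assume "x \<in> S \<union> (\<lambda>v. q - v) ` S"
    then consider "x \<in> S" | v where "v \<in> S" "x = q - v" by blast
    then show "x \<in> {x \<in> {0..<q}. \<not> self_neg q x \<and> P (absq q x)}"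
    proof cases
      case 1
      then show ?thesis using h by (auto simp: S_def absq_def self_neg_def)
    next
      case 2
      then have "x mod q = q - v" using h mod_pos_pos_trivial[of "q - v" q] by (auto simp: S_def)
      then show ?thesis using 2 h by (auto simp: S_def absq_def self_neg_def)
    qed
  qed
  moreover have "S \<inter> (\<lambda>v. q - v) ` S = {}" using h by (auto simp: S_def)
  moreover have "finite S" unfolding S_def by (rule finite_subset[of _ "{1..h}"]) auto
  ultimately show ?thesis
    using card_image[of "\<lambda>v. q - v" S] by (simp add: card_Un_disjoint inj_on_def S_def h_def)
qed

lemma card_compatible_absq:
  fixes q u :: int
  defines "h \<equiv> (q - 1) div 2"
  assumes u: "1 \<le> u" "2 * u < q"
  shows "int (card {v \<in> {1..h}. v \<noteq> u \<and> (q mod 4 = 1 \<longrightarrow> (u + 1) div 2 \<noteq> (v + 1) div 2)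
            \<and> (q mod 4 = 2 \<longrightarrow> 2 * u + 2 * v \<noteq> q)})
         = h - (if q mod 4 = 1 \<or> q mod 4 = 2 then 2 else 1)"
proof -
  have uh: "u \<le> h" using u unfolding h_def by presburger
  have card_diff: "int (card ({1..h} - B)) = h - int (card B)" if "B \<subseteq> {1..h}" for B
  proof -
    have "card B \<le> card {1..h}" using that by (intro card_mono) auto
    then show ?thesis using that uh u by (simp add: card_Diff_subset finite_subset)
  qed
  have "q mod 4 = 0 \<or> q mod 4 = 1 \<or> q mod 4 = 2 \<or> q mod 4 = 3" by presburger
  then consider "q mod 4 = 0 \<or> q mod 4 = 3" | "q mod 4 = 1" | "q mod 4 = 2" by blast
  then show ?thesis
  proof cases
    case 1
    then have "{v \<in> {1..h}. v \<noteq> u \<and> (q mod 4 = 1 \<longrightarrow> (u + 1) div 2 \<noteq> (v + 1) div 2)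
            \<and> (q mod 4 = 2 \<longrightarrow> 2 * u + 2 * v \<noteq> q)} = {1..h} - {u}" by auto
    moreover have "{u} \<subseteq> {1..h}" using u uh by auto
    moreover have "(if q mod 4 = 1 \<or> q mod 4 = 2 then 2 else 1) = (1::int)" using 1 by auto
    ultimately show ?thesis using card_diff[of "{u}"] by simp
  next
    case 2
    define w where "w = (u + 1) div 2"
    have "even h" using 2 unfolding h_def by presburger
    then have w: "1 \<le> 2 * w - 1" "2 * w \<le> h" using u uh unfolding w_def by presburger+
    have "{v \<in> {1..h}. v \<noteq> u \<and> (q mod 4 = 1 \<longrightarrow> (u + 1) div 2 \<noteq> (v + 1) div 2)
            \<and> (q mod 4 = 2 \<longrightarrow> 2 * u + 2 * v \<noteq> q)} = {1..h} - {2 * w - 1, 2 * w}"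
      using 2 unfolding w_def by (auto; presburger)
    moreover have "{2 * w - 1, 2 * w} \<subseteq> {1..h}" using w by auto
    ultimately show ?thesis using 2 card_diff[of "{2 * w - 1, 2 * w}"] by simp
  next
    case 3
    define k where "k = q div 2"
    have k: "q = 2 * k" "odd k" "h = k - 1" using 3 unfolding k_def h_def by presburger+
    have "{v \<in> {1..h}. v \<noteq> u \<and> (q mod 4 = 1 \<longrightarrow> (u + 1) div 2 \<noteq> (v + 1) div 2)
            \<and> (q mod 4 = 2 \<longrightarrow> 2 * u + 2 * v \<noteq> q)} = {1..h} - {u, k - u}"
      using 3 k by auto
    moreover have "k - u \<noteq> u" using k by presburger
    moreover have "{u, k - u} \<subseteq> {1..h}" using u uh k by auto
    ultimately show ?thesis using 3 card_diff[of "{u, k - u}"] by simp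
  qed
qed

lemma card_edge_set:
  fixes q :: int
  defines "h \<equiv> (q - 1) div 2" and "c \<equiv> (if q mod 4 = 1 \<or> q mod 4 = 2 then 2 else 1 :: int)"
  assumes q: "q > 0"
  shows "int (card (edge_set q)) = 4 * h * (h - c)"
proof -
  define A where "A = {a \<in> {0..<q}. \<not> self_neg q a}"
  define F where "F a = {b \<in> {0..<q}. is_edge q a b}" for a
  have edges: "edge_set q = Sigma A F"
    by (auto simp: edge_set_def A_def F_def is_edge_def)
  have "card A = 2 * card {v \<in> {1..h}. True}"
    using card_residues_by_absq[OF q, of "\<lambda>_. True"] by (simp add: A_def h_def)
  moreover have "{v \<in> {1..h}. True} = {1..h}" by blast
  ultimately have card_A: "int (card A) = 2 * h"
    using q by (simp add: h_def)
  have card_F: "int (card (F a)) = 2 * (h - c)" if "a \<in> A" for a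
  proof -
    define u where "u = absq q a"
    have na: "\<not> self_neg q a" using that by (simp add: A_def)
    then have u: "1 \<le> u" "2 * u < q" using absq_bounds[OF q] by (auto simp: u_def)
    define P where "P v \<longleftrightarrow> v \<noteq> u \<and> (q mod 4 = 1 \<longrightarrow> (u + 1) div 2 \<noteq> (v + 1) div 2)
        \<and> (q mod 4 = 2 \<longrightarrow> 2 * u + 2 * v \<noteq> q)" for v
    have "F a = {b \<in> {0..<q}. \<not> self_neg q b \<and> P (absq q b)}"
      using na by (auto simp: F_def P_def is_edge_def u_def)
    then have "card (F a) = 2 * card {v \<in> {1..h}. P v}"
      by (simp only: card_residues_by_absq[OF q] h_def)
    then show ?thesis
      using card_compatible_absq[OF u] by (simp add: P_def h_def c_def)
  qed
  have "card (edge_set q) = (\<Sum>a\<in>A. card (F a))"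
    unfolding edges by (rule card_SigmaI) (auto simp: A_def F_def intro: finite_subset[of _ "{0..<q}"])
  then have "int (card (edge_set q)) = (\<Sum>a\<in>A. 2 * (h - c))"
    using card_F by simp
  then show ?thesis using card_A by (simp add: algebra_simps)
qed

section \<open>Deleting a triangle\<close>

definition triangle :: "int \<Rightarrow> (int \<times> int) set" where
  "triangle q = {(1, (q - 1) div 4), ((q - 1) div 4, q - 2 - (q - 1) div 4), (q - 2 - (q - 1) div 4, 1)}"

lemma triangle_bounds:
  fixes q :: int
  defines "t \<equiv> (q - 1) div 4"
  assumes q: "q \<ge> 11"
  shows "4 * t \<le> q - 1" "q - 1 < 4 * t + 4" "2 \<le> t" "2 * t + 6 < q"
  using q unfolding t_def by presburger+

lemma triangle_residues:
  fixes q :: int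
  defines "t \<equiv> (q - 1) div 4" and "c \<equiv> q - 2 - (q - 1) div 4"
  assumes q: "q \<ge> 11"
  shows "1 mod q = 1" "t mod q = t" "c mod q = c" "(t - 1) mod q = t - 1"
    "(t + 1) mod q = t + 1" "(c - t) mod q = q - 2 - 2 * t" "(c + t) mod q = q - 2"
    "(1 + c) mod q = q - 1 - t" "(1 - c) mod q = t + 3"
    and "absq q 1 = 1" "absq q t = t" "absq q c = t + 2"
    and "\<not> self_neg q 1" "\<not> self_neg q t" "\<not> self_neg q c"
proof -
  note t = triangle_bounds[OF q, folded t_def]
  have sums: "c - t = q - 2 - 2 * t" "c + t = q - 2" "1 + c = q - 1 - t" "1 - c = t + 3 - q"
    by (simp_all add: c_def t_def)
  show mods: "1 mod q = 1" "t mod q = t" "c mod q = c" "(t - 1) mod q = t - 1"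
    "(t + 1) mod q = t + 1" "(c - t) mod q = q - 2 - 2 * t" "(c + t) mod q = q - 2"
    "(1 + c) mod q = q - 1 - t" "(1 - c) mod q = t + 3"
    unfolding sums using t
    by (simp_all add: c_def t_def [symmetric] mod_pos_pos_trivial del: minus_mod_self1)
  show "absq q 1 = 1" "absq q t = t" "absq q c = t + 2"
    using mods t by (simp_all add: absq_def c_def t_def [symmetric])
  show "\<not> self_neg q 1" "\<not> self_neg q t" "\<not> self_neg q c"
    using mods t by (auto simp: self_neg_def c_def t_def [symmetric])
qed

lemma triangle_edges:
  fixes q :: int
  defines "t \<equiv> (q - 1) div 4" and "c \<equiv> q - 2 - (q - 1) div 4"
  assumes q: "q \<ge> 11"
  shows "is_edge q 1 t" "is_edge q t c" "is_edge q c 1"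
proof -
  note t = triangle_bounds[OF q, folded t_def]
  note residues = triangle_residues[OF q, folded c_def, folded t_def]
  have q_mod: "q mod 4 = 1 \<Longrightarrow> q = 4 * t + 1" "q mod 4 = 2 \<Longrightarrow> q = 4 * t + 2"
    unfolding t_def by presburger+
  have "q mod 4 = 1 \<or> q mod 4 = 2 \<Longrightarrow> 3 \<le> t" using q_mod q by linarith
  moreover from this have "q mod 4 = 1 \<Longrightarrow> 2 \<le> (t + 1) div 2"
    using zdiv_mono1[of 4 "t + 1" 2] by simp
  moreover have "(t + 3) div 2 = (t + 1) div 2 + 1" "1 \<le> (t + 1) div 2" using t by simp_all
  ultimately show "is_edge q 1 t" "is_edge q t c" "is_edge q c 1"
    unfolding is_edge_def using residues(10-15) q_mod t by auto
qed

lemma triangle_subset_arc_set: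
  fixes q :: int
  assumes q: "q \<ge> 11"
  shows "triangle q \<subseteq> arc_set q"
proof -
  define t where "t = (q - 1) div 4"
  define c where "c = q - 2 - (q - 1) div 4"
  note t = triangle_bounds[OF q, folded t_def]
  note residues = triangle_residues[OF q, folded c_def, folded t_def]
  note edges = triangle_edges[OF q, folded c_def, folded t_def]
  have "generic_arc q 1 t"
    using residues t edges(1) by (simp add: generic_arc_def self_neg_def lower_half_def absq_def)
  moreover have "generic_arc q t c \<or> special_arc q t c"
  proof (cases "q mod 4 = 0")
    case True
    then have "q = 4 * t + 4" using t unfolding t_def by presburger
    then have "special_arc q t c"
      using True residues t by (simp add: special_arc_def)
    then show ?thesis ..
  next
    case False
    then have "q \<le> 4 * t + 3" using t unfolding t_def by presburger
    then show ?thesis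
      using residues t edges(2) by (simp add: generic_arc_def self_neg_def lower_half_def absq_def)
  qed
  moreover have "generic_arc q c 1"
    using residues t edges(3) by (simp add: generic_arc_def self_neg_def lower_half_def absq_def)
  ultimately show ?thesis
    using t by (auto simp: triangle_def arc_set_def is_arc_def c_def t_def [symmetric])
qed

lemma triangle_vertices_distinct:
  fixes q :: int
  defines "t \<equiv> (q - 1) div 4"
  assumes q: "q \<ge> 11"
  shows "1 \<noteq> t" "t \<noteq> q - 2 - t" "q - 2 - t \<noteq> 1"
  using triangle_bounds[OF q] by (auto simp: t_def)

lemma card_triangle: "q \<ge> 11 \<Longrightarrow> card (triangle q) = 3"
  using triangle_vertices_distinct[of q] by (simp add: triangle_def)

lemma sum_fst_triangle: "q \<ge> 11 \<Longrightarrow> (\<Sum>e\<in>triangle q. fst e) = q - 1"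
  using triangle_vertices_distinct[of q] by (simp add: triangle_def)

lemma balanced_triangle: "q \<ge> 11 \<Longrightarrow> balanced (triangle q)"
  unfolding triangle_def by (intro balanced_3_cycle triangle_vertices_distinct)

definition trail_arcs :: "int \<Rightarrow> (int \<times> int) set" where
  "trail_arcs q = arc_set q - triangle q"

lemma balanced_trail_arcs: "q \<ge> 11 \<Longrightarrow> balanced (trail_arcs q)"
  unfolding trail_arcs_def
  by (intro balanced_Diff finite_arc_set triangle_subset_arc_set balanced_arc_set balanced_triangle) simp_all

lemma reversal_free_trail_arcs: "q > 0 \<Longrightarrow> reversal_free q (trail_arcs q)"
  unfolding trail_arcs_def by (rule reversal_free_subset[OF reversal_free_arc_set]) auto

lemma card_sum_trail_arcs:
  fixes q :: int
  defines "h \<equiv> (q - 1) div 2" and "c \<equiv> (if q mod 4 = 1 \<or> q mod 4 = 2 then 2 else 1 :: int)"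
  assumes q: "q \<ge> 11"
  shows "int (card (trail_arcs q)) = 2 * h * (h - c) - 3"
    and "(\<Sum>e\<in>trail_arcs q. fst e) = q * (h * (h - c) - 1) + 1"
proof -
  have q0: "q > 0" using q by simp
  have card_arcs: "int (card (arc_set q)) = 2 * h * (h - c)"
    using card_edge_set[OF q0] card_edge_set_eq_twice_card_arc_set[OF q0] by (simp add: h_def c_def)
  have sub: "triangle q \<subseteq> arc_set q" using triangle_subset_arc_set[OF q] .
  then have "card (trail_arcs q) = card (arc_set q) - 3"
    using card_triangle[OF q] finite_arc_set by (simp add: trail_arcs_def card_Diff_subset finite_subset)
  moreover have "card (triangle q) \<le> card (arc_set q)" using sub finite_arc_set by (rule card_mono[rotated])
  ultimately show "int (card (trail_arcs q)) = 2 * h * (h - c) - 3"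
    using card_arcs card_triangle[OF q] by simp
  have "(\<Sum>e\<in>trail_arcs q. fst e) = (\<Sum>e\<in>arc_set q. fst e) - (q - 1)"
    using sum_diff[OF finite_arc_set sub, of fst] sum_fst_triangle[OF q] by (simp add: trail_arcs_def)
  also have "(\<Sum>e\<in>arc_set q. fst e) = q * (h * (h - c))"
    using sum_fst_arc_set[OF q0] card_arcs by (simp add: algebra_simps)
  finally show "(\<Sum>e\<in>trail_arcs q. fst e) = q * (h * (h - c) - 1) + 1"
    by (simp add: algebra_simps)
qed

lemma trail_arcs_if_edge:
  assumes q: "q > 0" and r: "0 \<le> x" "x < q" "0 \<le> y" "y < q" and edge: "is_edge q x y"
    and "(x, y) \<notin> triangle q" "(y, x) \<notin> triangle q"
  shows "(x, y) \<in> trail_arcs q \<or> (y, x) \<in> trail_arcs q"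
  using is_arc_iff_not_is_arc_swap[OF r q edge] r assms(7,8)
  by (auto simp: trail_arcs_def arc_set_def)

lemma absq_2_and_minus_3:
  assumes q: "q \<ge> 11"
  shows "absq q 2 = 2" "\<not> self_neg q 2" "absq q (q - 3) = 3" "\<not> self_neg q (q - 3)"
proof -
  have "2 mod q = 2" "(q - 3) mod q = q - 3" using q by (simp_all add: mod_pos_pos_trivial del: minus_mod_self1)
  then show "absq q 2 = 2" "\<not> self_neg q 2" "absq q (q - 3) = 3" "\<not> self_neg q (q - 3)"
    using q by (simp_all add: absq_def self_neg_def)
qed

lemma hub_arc:
  assumes q: "q \<ge> 11"
  shows "(2, q - 3) \<in> trail_arcs q \<or> (q - 3, 2) \<in> trail_arcs q"
proof (rule trail_arcs_if_edge)
  show "is_edge q 2 (q - 3)" using absq_2_and_minus_3[OF q] q by (simp add: is_edge_def)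
  show "(2, q - 3) \<notin> triangle q" "(q - 3, 2) \<notin> triangle q"
    using triangle_bounds[OF q] by (auto simp: triangle_def)
qed (use q in auto)

text \<open>A vertex adjacent to neither hub would have \<open>|v|\<close> excluded both by \<open>|2| = 2\<close> and by
  \<open>|q - 3| = 3\<close> (or lie on the triangle), and the exclusions are compatible only for \<open>q \<le> 10\<close>.\<close>

lemma trail_arcs_near_hubs:
  assumes q: "q \<ge> 11" and v: "v \<in> Field (trail_arcs q)"
  shows "v = 2 \<or> v = q - 3 \<or> (v, 2) \<in> trail_arcs q \<or> (2, v) \<in> trail_arcs q
    \<or> (v, q - 3) \<in> trail_arcs q \<or> (q - 3, v) \<in> trail_arcs q"
proof (rule ccontr)
  assume far: "\<not> ?thesis"
  define t where "t = (q - 1) div 4"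
  define c where "c = q - 2 - t"
  note t = triangle_bounds[OF q, folded t_def]
  have T: "triangle q = {(1, t), (t, c), (c, 1)}" by (simp add: triangle_def t_def c_def)
  have v_range: "0 \<le> v" "v < q" "\<not> self_neg q v"
    using v arc_setD by (auto simp: trail_arcs_def Field_def)
  define u where "u = absq q v"
  note hubs = absq_2_and_minus_3[OF q]
  have "\<not> is_edge q v (q - 3)"
    using trail_arcs_if_edge[of q v "q - 3"] far v_range q t by (auto simp: T c_def)
  then have blocked_by_3: "u = 3 \<or> (q mod 4 = 1 \<and> (u + 1) div 2 = 2) \<or> (q mod 4 = 2 \<and> 2 * u + 6 = q)"
    using v_range hubs unfolding is_edge_def u_def by auto
  have blocked_by_2: "u = 2 \<or> (q mod 4 = 1 \<and> (u + 1) div 2 = 1) \<or> (q mod 4 = 2 \<and> 2 * u + 4 = q)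
    \<or> (t = 2 \<and> (u = 1 \<or> u = 4))"
  proof (cases "(v, 2) \<in> triangle q \<or> (2, v) \<in> triangle q")
    case True
    then have "t = 2" "v = 1 \<or> v = c" using t by (auto simp: T c_def)
    moreover have "absq q 1 = 1" "absq q c = 4" if "t = 2"
      using q that by (simp_all add: absq_def c_def mod_pos_pos_trivial del: minus_mod_self1)
    ultimately show ?thesis by (auto simp: u_def)
  next
    case False
    then have "\<not> is_edge q v 2" using trail_arcs_if_edge[of q v 2] far v_range q by auto
    then show ?thesis using v_range hubs unfolding is_edge_def u_def by auto
  qed
  have "t = 2 \<Longrightarrow> q mod 4 \<noteq> 1 \<and> q mod 4 \<noteq> 2" using t(1,2) q by presburger
  then show False using blocked_by_2 blocked_by_3 q by auto
qed

lemma trail_arcs_connected: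
  assumes q: "q \<ge> 11" and "u \<in> Field (trail_arcs q)" "v \<in> Field (trail_arcs q)"
  shows "(u, v) \<in> (trail_arcs q \<union> (trail_arcs q)\<inverse>)\<^sup>*"
proof (rule rtrancl_symmetric_via_hub[OF _ assms(2,3)])
  let ?R = "trail_arcs q \<union> (trail_arcs q)\<inverse>"
  have hub: "(q - 3, 2) \<in> ?R\<^sup>*" using hub_arc[OF q] by auto
  fix w assume "w \<in> Field (trail_arcs q)"
  then consider "w = 2" | "w = q - 3" | "(w, 2) \<in> ?R" | "(w, q - 3) \<in> ?R"
    using trail_arcs_near_hubs[OF q] by blast
  then show "(w, 2) \<in> ?R\<^sup>*"
    by cases (use hub in \<open>auto intro: rtrancl_into_rtrancl converse_rtrancl_into_rtrancl\<close>)
qed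

lemma period_formula:
  fixes q :: int
  defines "h \<equiv> (q - 1) div 2" and "c \<equiv> (if q mod 4 = 1 \<or> q mod 4 = 2 then 2 else 1 :: int)"
  shows "q * (2 * h * (h - c) - 3) = (if q mod 4 = 0 then (q^3 - 6*q^2 + 2*q) div 2
             else if q mod 4 = 1 then (q^3 - 6*q^2 - q) div 2
             else if q mod 4 = 2 then (q^3 - 8*q^2 + 6*q) div 2
             else (q^3 - 4*q^2 - 3*q) div 2)"
proof -
  define j where "j = q div 4"
  have "q mod 4 = 0 \<or> q mod 4 = 1 \<or> q mod 4 = 2 \<or> q mod 4 = 3" by presburger
  moreover have "q^3 - 6*q^2 + 2*q = 2 * (q * (2 * h * (h - c) - 3))" if "q mod 4 = 0"
  proof -
    have "q = 4 * j" "h = 2 * j - 1" "c = 1" using that unfolding j_def h_def c_def by presburger+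
    then show ?thesis by (simp only:) (simp add: power3_eq_cube power2_eq_square algebra_simps)
  qed
  moreover have "q^3 - 6*q^2 - q = 2 * (q * (2 * h * (h - c) - 3))" if "q mod 4 = 1"
  proof -
    have "q = 4 * j + 1" "h = 2 * j" "c = 2" using that unfolding j_def h_def c_def by presburger+
    then show ?thesis by (simp only:) (simp add: power3_eq_cube power2_eq_square algebra_simps)
  qed
  moreover have "q^3 - 8*q^2 + 6*q = 2 * (q * (2 * h * (h - c) - 3))" if "q mod 4 = 2"
  proof -
    have "q = 4 * j + 2" "h = 2 * j" "c = 2" using that unfolding j_def h_def c_def by presburger+
    then show ?thesis by (simp only:) (simp add: power3_eq_cube power2_eq_square algebra_simps)
  qed
  moreover have "q^3 - 4*q^2 - 3*q = 2 * (q * (2 * h * (h - c) - 3))" if "q mod 4 = 3"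
  proof -
    have "q = 4 * j + 3" "h = 2 * j + 1" "c = 1" using that unfolding j_def h_def c_def by presburger+
    then show ?thesis by (simp only:) (simp add: power3_eq_cube power2_eq_square algebra_simps)
  qed
  ultimately show ?thesis by auto
qed

theorem corollary5p3:
  fixes q :: int
  assumes "q \<ge> 11"
  shows "\<exists>s m. is_SOS q 3 s m \<and>
    int m = (if q mod 4 = 0 then (q^3 - 6*q^2 + 2*q) div 2
             else if q mod 4 = 1 then (q^3 - 6*q^2 - q) div 2
             else if q mod 4 = 2 then (q^3 - 8*q^2 + 6*q) div 2
             else (q^3 - 4*q^2 - 3*q) div 2)"
proof -
  have q: "q > 0" using assms by simp
  have "(\<Sum>e\<in>trail_arcs q. fst e) mod q = 1"
    using card_sum_trail_arcs(2)[OF assms] assms by simp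
  then have "coprime (\<Sum>e\<in>trail_arcs q. fst e) q"
    using coprime_mod_left_iff[of q] q by (metis coprime_1_left less_irrefl)
  moreover have "finite (trail_arcs q)" by (simp add: trail_arcs_def finite_arc_set)
  moreover have "trail_arcs q \<noteq> {}" using hub_arc[OF assms] by auto
  moreover have "trail_arcs q \<subseteq> {0..<q} \<times> {0..<q}"
    using arc_setD by (fastforce simp: trail_arcs_def)
  ultimately obtain s where "is_SOS q 3 s (nat q * card (trail_arcs q))"
    using is_SOS_of_arc_set[OF q _ _ _ balanced_trail_arcs[OF assms] trail_arcs_connected[OF assms]
        reversal_free_trail_arcs[OF q]] by blast
  moreover have "int (nat q * card (trail_arcs q)) = q * int (card (trail_arcs q))"
    using q by simp
  ultimately show ?thesis
    using card_sum_trail_arcs(1)[OF assms] period_formula[of q] by (metis (no_types))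
qed

end
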